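(* The $K$-bilinear map $\psi:\mathfrak{stl}_3(R)\times\mathfrak{stl}_3(R)\to\mathcal U$ defined below is a Leibniz $2$-cocycle, i.e. $\psi(x,[y,z])+\psi([x,z],y)-\psi([x,y],z)=0$ for all $x,y,z\in\mathfrak{stl}_3(R)$.
   Context: $K$ unital commutative ring, $R$ unital associative $K$-algebra, free as $K$-module with basis containing $1$. Leibniz algebra: $K$-bilinear bracket with $[x,[y,z]]=[[x,y],z]-[[x,z],y]$. $\mathfrak{stl}_3(R)$: Leibniz algebra over $K$ generated by $X_{ij}(a)$, $a\in R$, $1\le i\ne j\le 3$, subject to $K$-linearity in $a$, $[X_{ij}(a),X_{jk}(b)]=X_{ik}(ab)$ and $[X_{ij}(a),X_{ki}(b)]=-X_{kj}(ba)$ for distinct $i,j,k$, $[X_{ij}(a),X_{kl}(b)]=0$ for $j\ne k$, $i\ne l$. $H$ is the $K$-span of all $[X_{ij}(a),X_{ji}(b)]$; $\mathfrak{stl}_3(R)=H\oplus\bigoplus_{i\ne j}X_{ij}(R)$ with $a\mapsto X_{ij}(a)$ injective. $R_3=R/\mathcal I_3$ with $\mathcal I_3=3R+R[R,R]$ the ideal generated by all $3a$ and $ab-ba$; $\bar a$ the class of $a$. $\mathcal U=R_3^6$ with coordinates indexed by $\{1,2,3,-1,-2,-3\}$; $\bar a^{(m)}$ denotes the element with coordinate $\bar a$ at index $m$ and $0$ elsewhere. For $m\ne n$ in $\{1,2,3\}$, $\mathrm{sign}(m,n)=1$ if $m<n$ and $-1$ if $m>n$. $\psi$ is the $K$-bilinear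 map with $\psi(X_{ij}(a),X_{ik}(b))=\mathrm{sign}(j,k)\,(\overline{ab})^{(i)}$ and $\psi(X_{ij}(a),X_{kj}(b))=\mathrm{sign}(i,k)\,(\overline{ab})^{(-j)}$ for $a,b\in R$ and distinct $i,j,k$, $\psi=0$ on all other pairs $X_{ij}(a),X_{kl}(b)$, and $\psi=0$ whenever an argument lies in $H$. *)

theory Defs
  imports Main "HOL.Modules"
begin

definition ideal_gen :: "'r::ring_1 set \<Rightarrow> 'r set" where
  "ideal_gen S = \<Inter>{I. S \<subseteq> I \<and> 0 \<in> I \<and> (\<forall>x\<in>I. \<forall>y\<in>I. x + y \<in> I)
      \<and> (\<forall>x\<in>I. - x \<in> I) \<and> (\<forall>x\<in>I. \<forall>r. r * x \<in> I \<and> x * r \<in> I)}"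

definition I3 :: "'r::ring_1 set" where
  "I3 = ideal_gen ({3 * a | a. True} \<union> {a * b - b * a | a b. True})"

definition sgn3 :: "nat \<Rightarrow> nat \<Rightarrow> 'r::ring_1" where
  "sgn3 m n = (if m < n then 1 else - 1)"

definition pairs3 :: "(nat \<times> nat) set" where
  "pairs3 = {(i, j). i \<in> {1,2,3} \<and> j \<in> {1,2,3} \<and> i \<noteq> j}"

text \<open>Coordinate vector in R^6 (indices 1,2,3,-1,-2,-3) with entry c at index m.\<close>
definition single6 :: "int \<Rightarrow> 'r::zero \<Rightarrow> int \<Rightarrow> 'r" where
  "single6 m c = (\<lambda>n. if n = m then c else 0)"

end

theory Submission
  imports Defs
begin

text \<open>The defect \<open>\<psi>(x,[y,z]) + \<psi>([x,z],y) - \<psi>([x,y],z)\<close> is \<open>K\<close>-trilinear, and \<open>stl\<^sub>3(R)\<close> is spanned by the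
  root elements \<open>X\<^sub>i\<^sub>j(a)\<close> together with the elements \<open>h\<^sub>i\<^sub>j(a,b) = [X\<^sub>i\<^sub>j(a), X\<^sub>j\<^sub>i(b)]\<close> spanning \<open>H\<close>, so it
  suffices to check the identity on triples of such generators. By the Leibniz identity and the
  Steinberg relations, \<open>[h\<^sub>i\<^sub>j(a,b), X\<^sub>k\<^sub>l(c)]\<close> lies again in \<open>X\<^sub>k\<^sub>l(R)\<close>, so \<open>[h, h']\<close> lies in \<open>H\<close>,
  where \<open>\<psi>\<close> vanishes; this settles every triple with two entries in \<open>H\<close>. The remaining triples
  reduce to explicit identities between products of at most three ring elements, which hold in
  \<open>R\<^sub>3 = R/I\<^sub>3\<close> because this quotient is commutative of characteristic 3; they are decided by
  normalising in that quotient ring.\<close>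

definition two_sided_ideal :: "'r::ring_1 set \<Rightarrow> bool" where
  "two_sided_ideal I \<longleftrightarrow> 0 \<in> I \<and> (\<forall>x\<in>I. \<forall>y\<in>I. x + y \<in> I)
      \<and> (\<forall>x\<in>I. - x \<in> I) \<and> (\<forall>x\<in>I. \<forall>r. r * x \<in> I \<and> x * r \<in> I)"

lemma two_sided_ideal_ideal_gen: "two_sided_ideal (ideal_gen S)"
  unfolding two_sided_ideal_def ideal_gen_def by auto

lemma ideal_gen_superset: "S \<subseteq> ideal_gen S"
  unfolding ideal_gen_def by blast

lemma two_sided_ideal_I3: "two_sided_ideal I3"
  unfolding I3_def by (rule two_sided_ideal_ideal_gen)

lemma zero_in_I3: "0 \<in> I3"
  using two_sided_ideal_I3 unfolding two_sided_ideal_def by blast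

lemma add_in_I3: "x \<in> I3 \<Longrightarrow> y \<in> I3 \<Longrightarrow> x + y \<in> I3"
  using two_sided_ideal_I3 unfolding two_sided_ideal_def by blast

lemma uminus_in_I3: "x \<in> I3 \<Longrightarrow> - x \<in> I3"
  using two_sided_ideal_I3 unfolding two_sided_ideal_def by blast

lemma mult_left_in_I3: "x \<in> I3 \<Longrightarrow> r * x \<in> I3"
  using two_sided_ideal_I3 unfolding two_sided_ideal_def by blast

lemma mult_right_in_I3: "x \<in> I3 \<Longrightarrow> x * r \<in> I3"
  using two_sided_ideal_I3 unfolding two_sided_ideal_def by blast

lemma diff_in_I3: "x \<in> I3 \<Longrightarrow> y \<in> I3 \<Longrightarrow> x - y \<in> I3"
  using add_in_I3[of x "- y"] uminus_in_I3[of y] by simp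

lemma
  shows three_mult_in_I3: "3 * a \<in> I3"
    and commutator_in_I3: "a * b - b * a \<in> I3"
  unfolding I3_def by (rule subsetD[OF ideal_gen_superset], blast)+

definition cong_I3 :: "'a::ring_1 \<Rightarrow> 'a \<Rightarrow> bool" where
  "cong_I3 x y \<longleftrightarrow> x - y \<in> I3"

lemma cong_I3_refl: "cong_I3 x x"
  by (simp add: cong_I3_def zero_in_I3)

lemma cong_I3_sym: "cong_I3 x y \<Longrightarrow> cong_I3 y x"
  unfolding cong_I3_def using uminus_in_I3[of "x - y"] by simp

lemma cong_I3_trans: "cong_I3 x y \<Longrightarrow> cong_I3 y z \<Longrightarrow> cong_I3 x z"
  unfolding cong_I3_def using add_in_I3[of "x - y" "y - z"] by simp

lemma cong_I3_add: "cong_I3 x x' \<Longrightarrow> cong_I3 y y' \<Longrightarrow> cong_I3 (x + y) (x' + y')"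
  unfolding cong_I3_def using add_in_I3[of "x - x'" "y - y'"] by (simp add: algebra_simps)

lemma cong_I3_uminus: "cong_I3 x x' \<Longrightarrow> cong_I3 (- x) (- x')"
  unfolding cong_I3_def using uminus_in_I3[of "x - x'"] by simp

lemma cong_I3_diff: "cong_I3 x x' \<Longrightarrow> cong_I3 y y' \<Longrightarrow> cong_I3 (x - y) (x' - y')"
  unfolding cong_I3_def using diff_in_I3[of "x - x'" "y - y'"] by (simp add: algebra_simps)

lemma cong_I3_mult: "cong_I3 x x' \<Longrightarrow> cong_I3 y y' \<Longrightarrow> cong_I3 (x * y) (x' * y')"
proof -
  assume "cong_I3 x x'" "cong_I3 y y'"
  then have "x * (y - y') + (x - x') * y' \<in> I3"
    unfolding cong_I3_def by (intro add_in_I3 mult_left_in_I3 mult_right_in_I3)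
  then show "cong_I3 (x * y) (x' * y')"
    unfolding cong_I3_def by (simp add: algebra_simps)
qed

lemma equivp_cong_I3: "equivp (cong_I3 :: 'a::ring_1 \<Rightarrow> _)"
proof (rule equivpI)
  show "reflp (cong_I3 :: 'a \<Rightarrow> _)"
    by (rule reflpI) (rule cong_I3_refl)
  show "symp (cong_I3 :: 'a \<Rightarrow> _)"
    by (rule sympI) (erule cong_I3_sym)
  show "transp (cong_I3 :: 'a \<Rightarrow> _)"
    by (rule transpI) (erule (1) cong_I3_trans)
qed

quotient_type (overloaded) 'a r3 = "'a::ring_1" / cong_I3
  by (rule equivp_cong_I3)

instantiation r3 :: (ring_1) comm_ring
begin

lift_definition zero_r3 :: "'a r3" is 0 .

lift_definition plus_r3 :: "'a r3 \<Rightarrow> 'a r3 \<Rightarrow> 'a r3" is "(+)"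
  by (rule cong_I3_add)

lift_definition uminus_r3 :: "'a r3 \<Rightarrow> 'a r3" is uminus
  by (rule cong_I3_uminus)

lift_definition minus_r3 :: "'a r3 \<Rightarrow> 'a r3 \<Rightarrow> 'a r3" is "(-)"
  by (rule cong_I3_diff)

lift_definition times_r3 :: "'a r3 \<Rightarrow> 'a r3 \<Rightarrow> 'a r3" is "(*)"
  by (rule cong_I3_mult)

instance
proof
  fix a b c :: "'a r3"
  show "a * b * c = a * (b * c)" by transfer (simp add: mult.assoc cong_I3_refl)
  show "a * b = b * a" by transfer (simp add: cong_I3_def commutator_in_I3)
  show "a + b + c = a + (b + c)" by transfer (simp add: add.assoc cong_I3_refl)
  show "a + b = b + a" by transfer (simp add: add.commute cong_I3_refl)
  show "0 + a = a" by transfer (simp add: cong_I3_refl)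
  show "- a + a = 0" by transfer (simp add: cong_I3_refl)
  show "a - b = a + - b" by transfer (simp add: cong_I3_refl)
  show "(a + b) * c = a * c + b * c" by transfer (simp add: distrib_right cong_I3_refl)
qed

end

lemma abs_r3_ring_hom [simp]:
  shows "abs_r3 (x + y) = abs_r3 x + abs_r3 y"
    and "abs_r3 (x - y) = abs_r3 x - abs_r3 y"
    and "abs_r3 (- x) = - abs_r3 x"
    and "abs_r3 (x * y) = abs_r3 x * abs_r3 y"
    and "abs_r3 0 = 0"
  by (transfer, rule cong_I3_refl)+

lemma abs_r3_eq_0_iff: "abs_r3 x = 0 \<longleftrightarrow> x \<in> I3"
  by (metis abs_r3_ring_hom(5) cong_I3_def diff_zero r3.abs_eq_iff)

lemma r3_add_self3: "(y :: 'a::ring_1 r3) + y + y = 0"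
proof transfer
  fix y :: 'a
  have "3 * y = (1 + 1 + 1) * y"
    by simp
  then have "y + y + y = 3 * y"
    by (simp only: distrib_right mult_1_left)
  then show "cong_I3 (y + y + y) 0"
    by (simp add: cong_I3_def three_mult_in_I3)
qed

text \<open>A terminating normal form for characteristic 3: negation is doubling, and
  three equal summands cancel.\<close>
lemma r3_char3_simps:
  fixes y z :: "'a::ring_1 r3"
  shows "- y = y + y"
    and "z - y = z + (y + y)"
    and "y + (y + y) = 0"
    and "y + (y + (y + z)) = z"
proof -
  show neg: "- y = y + y"
    using r3_add_self3[of y] by (metis add_eq_0_iff2)
  show "z - y = z + (y + y)"
    by (simp add: neg flip: diff_conv_add_uminus)
  show "y + (y + y) = 0"
    using r3_add_self3[of y] by (simp add: add.assoc)
  then show "y + (y + (y + z)) = z"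
    by (simp flip: add.assoc)
qed

text \<open>The hypotheses of \<open>lemma4p2\<close>, except that \<open>R\<close> need not be free over \<open>K\<close> and the
  decomposition \<open>stl\<^sub>3(R) = H + \<Sum> X\<^sub>i\<^sub>j(R)\<close> need not be unique.\<close>

locale stl3 =
  fixes smR :: "'k::comm_ring_1 \<Rightarrow> 'r::ring_1 \<Rightarrow> 'r"
    and smL :: "'k \<Rightarrow> 'l::ab_group_add \<Rightarrow> 'l"
    and br :: "'l \<Rightarrow> 'l \<Rightarrow> 'l"
    and X :: "nat \<Rightarrow> nat \<Rightarrow> 'r \<Rightarrow> 'l"
    and H :: "'l set"
    and \<psi> :: "'l \<Rightarrow> 'l \<Rightarrow> int \<Rightarrow> 'r"
  assumes modR: "module smR"
    and algR: "\<And>c a b. smR c (a * b) = smR c a * b \<and> smR c (a * b) = a * smR c b"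
    and modL: "module smL"
    and br_add1: "\<And>x x' y. br (x + x') y = br x y + br x' y"
    and br_add2: "\<And>x y y'. br x (y + y') = br x y + br x y'"
    and br_sm1: "\<And>c x y. br (smL c x) y = smL c (br x y)"
    and br_sm2: "\<And>c x y. br x (smL c y) = smL c (br x y)"
    and leibniz: "\<And>x y z. br x (br y z) = br (br x y) z - br (br x z) y"
    and X_add: "\<And>i j a b. X i j (a + b) = X i j a + X i j b"
    and X_sm: "\<And>i j c a. X i j (smR c a) = smL c (X i j a)"
    and rel1: "\<And>i j k a b. i \<in> {1,2,3} \<Longrightarrow> j \<in> {1,2,3} \<Longrightarrow> k \<in> {1,2,3} \<Longrightarrow>
                 i \<noteq> j \<Longrightarrow> j \<noteq> k \<Longrightarrow> i \<noteq> k \<Longrightarrow> br (X i j a) (X j k b) = X i k (a * b)"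
    and rel2: "\<And>i j k a b. i \<in> {1,2,3} \<Longrightarrow> j \<in> {1,2,3} \<Longrightarrow> k \<in> {1,2,3} \<Longrightarrow>
                 i \<noteq> j \<Longrightarrow> j \<noteq> k \<Longrightarrow> i \<noteq> k \<Longrightarrow> br (X i j a) (X k i b) = - X k j (b * a)"
    and rel3: "\<And>i j k l a b. (i, j) \<in> pairs3 \<Longrightarrow> (k, l) \<in> pairs3 \<Longrightarrow>
                 j \<noteq> k \<Longrightarrow> i \<noteq> l \<Longrightarrow> br (X i j a) (X k l b) = 0"
    and H_def: "H = module.span smL {br (X i j a) (X j i b) | i j a b. (i, j) \<in> pairs3}"
    and decomp: "\<And>x. \<exists>h a. h \<in> H \<and> x = h + (\<Sum>(i, j)\<in>pairs3. X i j (a (i, j)))"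
    and psi_add1: "\<And>x x' y m. \<psi> (x + x') y m = \<psi> x y m + \<psi> x' y m"
    and psi_add2: "\<And>x y y' m. \<psi> x (y + y') m = \<psi> x y m + \<psi> x y' m"
    and psi_sm1: "\<And>c x y m. \<psi> (smL c x) y m = smR c (\<psi> x y m)"
    and psi_sm2: "\<And>c x y m. \<psi> x (smL c y) m = smR c (\<psi> x y m)"
    and psi_row: "\<And>i j k a b. i \<in> {1,2,3} \<Longrightarrow> j \<in> {1,2,3} \<Longrightarrow> k \<in> {1,2,3} \<Longrightarrow>
                 i \<noteq> j \<Longrightarrow> j \<noteq> k \<Longrightarrow> i \<noteq> k \<Longrightarrow>
                 \<psi> (X i j a) (X i k b) = single6 (int i) (sgn3 j k * (a * b))"
    and psi_col: "\<And>i j k a b. i \<in> {1,2,3} \<Longrightarrow> j \<in> {1,2,3} \<Longrightarrow> k \<in> {1,2,3} \<Longrightarrow>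
                 i \<noteq> j \<Longrightarrow> j \<noteq> k \<Longrightarrow> i \<noteq> k \<Longrightarrow>
                 \<psi> (X i j a) (X k j b) = single6 (- int j) (sgn3 i k * (a * b))"
    and psi_other: "\<And>i j k l a b. (i, j) \<in> pairs3 \<Longrightarrow> (k, l) \<in> pairs3 \<Longrightarrow>
                 \<not> (i = k \<and> j \<noteq> l) \<Longrightarrow> \<not> (j = l \<and> i \<noteq> k) \<Longrightarrow> \<psi> (X i j a) (X k l b) = (\<lambda>m. 0)"
    and psi_H1: "\<And>h y. h \<in> H \<Longrightarrow> \<psi> h y = (\<lambda>m. 0)"
    and psi_H2: "\<And>x h. h \<in> H \<Longrightarrow> \<psi> x h = (\<lambda>m. 0)"
begin

lemma module_hom_bracket_left: "module_hom smL smL (\<lambda>x. br x y)"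
  unfolding module_hom_iff using modL br_add1 br_sm1 by blast

lemma module_hom_bracket_right: "module_hom smL smL (br x)"
  unfolding module_hom_iff using modL br_add2 br_sm2 by blast

lemma module_hom_X: "module_hom smR smL (X i j)"
  unfolding module_hom_iff using modR modL X_add X_sm by blast

lemma module_hom_psi_left: "module_hom smL smR (\<lambda>x. \<psi> x y m)"
  unfolding module_hom_iff using modL modR psi_add1 psi_sm1 by blast

lemma module_hom_psi_right: "module_hom smL smR (\<lambda>y. \<psi> x y m)"
  unfolding module_hom_iff using modL modR psi_add2 psi_sm2 by blast

lemmas bracket_additive_simps [simp] =
  module_hom.zero[OF module_hom_bracket_left] module_hom.neg[OF module_hom_bracket_left]
  module_hom.diff[OF module_hom_bracket_left]
  module_hom.zero[OF module_hom_bracket_right] module_hom.neg[OF module_hom_bracket_right]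
  module_hom.diff[OF module_hom_bracket_right]

lemmas X_additive_simps [simp] =
  module_hom.zero[OF module_hom_X] module_hom.neg[OF module_hom_X] module_hom.diff[OF module_hom_X]

lemmas psi_additive_simps [simp] =
  module_hom.zero[OF module_hom_psi_left] module_hom.neg[OF module_hom_psi_left]
  module_hom.diff[OF module_hom_psi_left]
  module_hom.zero[OF module_hom_psi_right] module_hom.neg[OF module_hom_psi_right]
  module_hom.diff[OF module_hom_psi_right]

definition Hgen :: "nat \<Rightarrow> nat \<Rightarrow> 'r \<Rightarrow> 'r \<Rightarrow> 'l" where
  "Hgen i j a b = br (X i j a) (X j i b)"

lemma Hgen_in_H: "(i, j) \<in> pairs3 \<Longrightarrow> Hgen i j a b \<in> H"
  unfolding H_def Hgen_def by (rule module.span_base[OF modL]) blast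

lemma psi_H_pointwise:
  assumes "h \<in> H"
  shows "\<psi> h y m = 0" and "\<psi> y h m = 0"
  using psi_H1[OF assms] psi_H2[OF assms] by simp_all

lemma psi_Hgen [simp]:
  assumes "(i, j) \<in> pairs3"
  shows "\<psi> (Hgen i j a b) y m = 0" and "\<psi> y (Hgen i j a b) m = 0"
  using psi_H_pointwise[OF Hgen_in_H[OF assms]] by simp_all

lemma leibniz_left: "br (br u v) w = br u (br v w) + br (br u w) v"
  using leibniz[of u v w] by simp

lemma pairs3I: "i \<in> {1,2,3} \<Longrightarrow> j \<in> {1,2,3} \<Longrightarrow> i \<noteq> j \<Longrightarrow> (i, j) \<in> pairs3"
  by (simp add: pairs3_def)

lemma pairs3_eq: "pairs3 = {(1,2), (1,3), (2,1), (2,3), (3,1), (3,2)}"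
  unfolding pairs3_def by auto

lemma third_index:
  assumes "i \<in> {1,2,3}" "j \<in> {1,2,3}" "i \<noteq> j"
  obtains t :: nat where "t \<in> {1,2,3}" "i \<noteq> t" "j \<noteq> t"
proof
  show "6 - i - j \<in> {1,2,3}" "i \<noteq> 6 - i - j" "j \<noteq> 6 - i - j"
    using assms by auto
qed

context
  fixes i j t :: nat
  assumes ijt: "i \<in> {1,2,3}" "j \<in> {1,2,3}" "t \<in> {1,2,3}" "i \<noteq> j" "i \<noteq> t" "j \<noteq> t"
begin

lemma bracket_Hgen_X_it: "br (Hgen i j a b) (X i t c) = X i t (a * b * c)"
  unfolding Hgen_def
  by (subst leibniz_left) (use ijt in \<open>simp add: rel1 rel2 rel3 pairs3I mult.assoc\<close>)

lemma bracket_Hgen_X_jt: "br (Hgen i j a b) (X j t c) = X j t (- (b * a * c))"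
  unfolding Hgen_def
  by (subst leibniz_left) (use ijt in \<open>simp add: rel1 rel2 rel3 pairs3I mult.assoc\<close>)

lemma bracket_Hgen_X_ti: "br (Hgen i j a b) (X t i c) = X t i (- (c * a * b))"
  unfolding Hgen_def
  by (subst leibniz_left) (use ijt in \<open>simp add: rel1 rel2 rel3 pairs3I mult.assoc\<close>)

lemma bracket_Hgen_X_tj: "br (Hgen i j a b) (X t j c) = X t j (c * b * a)"
  unfolding Hgen_def
  by (subst leibniz_left) (use ijt in \<open>simp add: rel1 rel2 rel3 pairs3I mult.assoc\<close>)

end

text \<open>For \<open>X\<^sub>i\<^sub>j\<close> and \<open>X\<^sub>j\<^sub>i\<close> the bracket is computed by factoring through the third index.\<close>

lemma bracket_Hgen_X_ij [simp]:
  assumes "(i, j) \<in> pairs3"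
  shows "br (Hgen i j a b) (X i j c) = X i j (a * b * c + c * b * a)"
proof -
  from assms have ij: "i \<in> {1,2,3}" "j \<in> {1,2,3}" "i \<noteq> j"
    by (simp_all add: pairs3_def)
  obtain t where t: "t \<in> {1,2,3}" "i \<noteq> t" "j \<noteq> t"
    using third_index[OF ij] .
  have "X i j c = br (X i t c) (X t j 1)"
    using ij t by (simp add: rel1)
  then have "br (Hgen i j a b) (X i j c)
      = br (br (Hgen i j a b) (X i t c)) (X t j 1) - br (br (Hgen i j a b) (X t j 1)) (X i t c)"
    by (simp only: leibniz)
  also have "\<dots> = br (X i t (a * b * c)) (X t j 1) - br (X t j (b * a)) (X i t c)"
    using ij t by (simp add: bracket_Hgen_X_it bracket_Hgen_X_tj)
  also have "\<dots> = X i j (a * b * c + c * b * a)"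
    using ij t by (simp add: rel1 rel2 X_add mult.assoc)
  finally show ?thesis .
qed

lemma bracket_Hgen_X_ji [simp]:
  assumes "(i, j) \<in> pairs3"
  shows "br (Hgen i j a b) (X j i c) = X j i (- (b * a * c) - c * a * b)"
proof -
  from assms have ij: "i \<in> {1,2,3}" "j \<in> {1,2,3}" "i \<noteq> j"
    by (simp_all add: pairs3_def)
  obtain t where t: "t \<in> {1,2,3}" "i \<noteq> t" "j \<noteq> t"
    using third_index[OF ij] .
  have "X j i c = br (X j t c) (X t i 1)"
    using ij t by (simp add: rel1)
  then have "br (Hgen i j a b) (X j i c)
      = br (br (Hgen i j a b) (X j t c)) (X t i 1) - br (br (Hgen i j a b) (X t i 1)) (X j t c)"
    by (simp only: leibniz)
  also have "\<dots> = br (X j t (- (b * a * c))) (X t i 1) - br (X t i (- (a * b))) (X j t c)"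
    using ij t by (simp add: bracket_Hgen_X_jt bracket_Hgen_X_ti)
  also have "\<dots> = X j i (- (b * a * c) - c * a * b)"
    using ij t by (simp add: rel1 rel2 mult.assoc)
  finally show ?thesis .
qed

lemma Hgen_fold: "br (X i j a) (X j i b) = Hgen i j a b"
  by (simp add: Hgen_def)

lemma bracket_Hgen_right:
  "br w (Hgen i j a b) = br (br w (X i j a)) (X j i b) - br (br w (X j i b)) (X i j a)"
  unfolding Hgen_def by (rule leibniz)

lemma bracket_Hgen_X_in_range:
  assumes "(i, j) \<in> pairs3" "(k, l) \<in> pairs3"
  shows "\<exists>r. br (Hgen i j a b) (X k l c) = X k l r"
  using assms unfolding pairs3_eq
  by (auto simp: bracket_Hgen_X_it bracket_Hgen_X_jt bracket_Hgen_X_ti bracket_Hgen_X_tj pairs3_def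
      simp del: X_additive_simps)

lemma bracket_Hgen_Hgen_in_H:
  assumes ij: "(i, j) \<in> pairs3" and kl: "(k, l) \<in> pairs3"
  shows "br (Hgen i j a b) (Hgen k l c d) \<in> H"
proof -
  from kl have lk: "(l, k) \<in> pairs3"
    by (auto simp: pairs3_def)
  obtain r where r: "br (Hgen i j a b) (X k l c) = X k l r"
    using bracket_Hgen_X_in_range[OF ij kl] by blast
  obtain r' where r': "br (Hgen i j a b) (X l k d) = X l k r'"
    using bracket_Hgen_X_in_range[OF ij lk] by blast
  have "br (Hgen i j a b) (Hgen k l c d) = Hgen k l r d - Hgen l k r' c"
    by (simp add: bracket_Hgen_right r r' Hgen_fold)
  also have "\<dots> \<in> H"
    unfolding H_def
    by (intro module.span_diff[OF modL]; fold H_def; rule Hgen_in_H) (use kl lk in auto)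
  finally show ?thesis .
qed

lemma psi_X_X_pointwise:
  shows "\<lbrakk>i \<in> {1,2,3}; j \<in> {1,2,3}; k \<in> {1,2,3}; i \<noteq> j; j \<noteq> k; i \<noteq> k\<rbrakk> \<Longrightarrow>
      \<psi> (X i j a) (X i k b) m = (if m = int i then sgn3 j k * (a * b) else 0)"
    and "\<lbrakk>i \<in> {1,2,3}; j \<in> {1,2,3}; k \<in> {1,2,3}; i \<noteq> j; j \<noteq> k; i \<noteq> k\<rbrakk> \<Longrightarrow>
      \<psi> (X i j a) (X k j b) m = (if m = - int j then sgn3 i k * (a * b) else 0)"
    and "\<lbrakk>(i, j) \<in> pairs3; (k, l) \<in> pairs3; \<not> (i = k \<and> j \<noteq> l); \<not> (j = l \<and> i \<noteq> k)\<rbrakk> \<Longrightarrow>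
      \<psi> (X i j a) (X k l b) m = 0"
  by (simp_all add: psi_row psi_col psi_other single6_def)

lemmas generator_simps = rel1 rel2 rel3 Hgen_fold bracket_Hgen_right
  bracket_Hgen_X_it bracket_Hgen_X_jt bracket_Hgen_X_ti bracket_Hgen_X_tj
  br_add1 br_add2 X_add psi_add1 psi_add2 psi_X_X_pointwise pairs3_def sgn3_def

definition cocycle_defect :: "'l \<Rightarrow> 'l \<Rightarrow> 'l \<Rightarrow> int \<Rightarrow> 'r" where
  "cocycle_defect x y z m = \<psi> x (br y z) m + \<psi> (br x z) y m - \<psi> (br x y) z m"

lemma cocycle_defect_X_X_X:
  assumes "(i, j) \<in> pairs3" "(k, l) \<in> pairs3" "(p, r) \<in> pairs3"
  shows "abs_r3 (cocycle_defect (X i j a) (X k l b) (X p r c) m) = 0"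
  using assms unfolding pairs3_eq
  by (auto simp: cocycle_defect_def generator_simps r3_char3_simps add_ac mult_ac)

lemma cocycle_defect_H_X_X:
  assumes "(i, j) \<in> pairs3" "(k, l) \<in> pairs3" "(p, r) \<in> pairs3"
  shows "abs_r3 (cocycle_defect (Hgen i j a d) (X k l b) (X p r c) m) = 0"
  using assms unfolding pairs3_eq
  by (auto simp: cocycle_defect_def generator_simps r3_char3_simps add_ac mult_ac)

lemma cocycle_defect_X_H_X:
  assumes "(i, j) \<in> pairs3" "(k, l) \<in> pairs3" "(p, r) \<in> pairs3"
  shows "abs_r3 (cocycle_defect (X k l b) (Hgen i j a d) (X p r c) m) = 0"
  using assms unfolding pairs3_eq
  by (auto simp: cocycle_defect_def generator_simps r3_char3_simps add_ac mult_ac)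

lemma cocycle_defect_X_X_H:
  assumes "(i, j) \<in> pairs3" "(k, l) \<in> pairs3" "(p, r) \<in> pairs3"
  shows "abs_r3 (cocycle_defect (X k l b) (X p r c) (Hgen i j a d) m) = 0"
  using assms unfolding pairs3_eq
  by (auto simp: cocycle_defect_def generator_simps r3_char3_simps add_ac mult_ac)

lemma cocycle_defect_two_Hgen:
  assumes "(i, j) \<in> pairs3" "(k, l) \<in> pairs3"
  shows "cocycle_defect (Hgen i j a b) (Hgen k l c d) z m = 0"
    and "cocycle_defect (Hgen i j a b) y (Hgen k l c d) m = 0"
    and "cocycle_defect x (Hgen i j a b) (Hgen k l c d) m = 0"
  using assms psi_H_pointwise[OF bracket_Hgen_Hgen_in_H[OF assms]]
  by (simp_all add: cocycle_defect_def)

definition generators :: "'l set" where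
  "generators = {X i j a | i j a. (i, j) \<in> pairs3} \<union> {Hgen i j a b | i j a b. (i, j) \<in> pairs3}"

lemma span_generators: "module.span smL generators = UNIV"
proof -
  have "x \<in> module.span smL generators" for x
  proof -
    obtain h a where h: "h \<in> H" and x: "x = h + (\<Sum>(i, j)\<in>pairs3. X i j (a (i, j)))"
      using decomp by blast
    have "H \<subseteq> module.span smL generators"
      unfolding H_def generators_def Hgen_def by (intro module.span_mono[OF modL]) blast
    with h have "h \<in> module.span smL generators"
      by blast
    moreover have "(\<Sum>(i, j)\<in>pairs3. X i j (a (i, j))) \<in> module.span smL generators"
      by (intro module.span_sum[OF modL] module.span_base[OF modL]) (auto simp: generators_def)
    ultimately show ?thesis
      unfolding x by (rule module.span_add[OF modL])
  qed
  then show ?thesis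
    by blast
qed

lemma cocycle_defect_generators:
  assumes "x \<in> generators" "y \<in> generators" "z \<in> generators"
  shows "cocycle_defect x y z m \<in> I3"
  using assms unfolding generators_def
  by (auto simp: cocycle_defect_two_Hgen zero_in_I3 simp flip: abs_r3_eq_0_iff
      intro: cocycle_defect_X_X_X cocycle_defect_H_X_X cocycle_defect_X_H_X cocycle_defect_X_X_H)

lemma subspace_I3: "module.subspace smR I3"
proof (rule module.subspaceI[OF modR])
  fix c and x :: 'r
  assume "x \<in> I3"
  have "smR c x = smR c 1 * x"
    using algR[of c 1 x] by simp
  then show "smR c x \<in> I3"
    using mult_left_in_I3[OF \<open>x \<in> I3\<close>] by simp
qed (simp_all add: zero_in_I3 add_in_I3)

lemma module_hom_cocycle_defect:
  shows "module_hom smL smR (\<lambda>x. cocycle_defect x y z m)"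
    and "module_hom smL smR (\<lambda>y. cocycle_defect x y z m)"
    and "module_hom smL smR (\<lambda>z. cocycle_defect x y z m)"
  unfolding module_hom_iff cocycle_defect_def
  using modL modR
  by (simp_all add: br_add1 br_add2 br_sm1 br_sm2 psi_add1 psi_add2 psi_sm1 psi_sm2
      module.scale_right_distrib[OF modR] module.scale_right_diff_distrib[OF modR] algebra_simps)

lemma in_I3_if_on_generators:
  assumes f: "module_hom smL smR f" and gen: "\<And>g. g \<in> generators \<Longrightarrow> f g \<in> I3"
  shows "f x \<in> I3"
proof -
  have "x \<in> module.span smL generators"
    by (simp add: span_generators)
  moreover have "module.subspace smL (f -` I3)"
    by (rule module_hom.subspace_vimage[OF f subspace_I3])
  ultimately have "x \<in> f -` I3"
    by (rule module.span_subspace_induct[OF modL]) (simp add: gen)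
  then show ?thesis
    by simp
qed

lemma cocycle_defect_in_I3: "cocycle_defect x y z m \<in> I3"
proof -
  have "cocycle_defect x y z m \<in> I3" if "x \<in> generators" "y \<in> generators" for x y z
    using in_I3_if_on_generators[OF module_hom_cocycle_defect(3)] cocycle_defect_generators that
    by blast
  then have "cocycle_defect x y z m \<in> I3" if "x \<in> generators" for x y z
    using in_I3_if_on_generators[OF module_hom_cocycle_defect(2)] that by blast
  then show ?thesis
    using in_I3_if_on_generators[OF module_hom_cocycle_defect(1)] by blast
qed

end

theorem lemma4p2:
  fixes smR :: "'k::comm_ring_1 \<Rightarrow> 'r::ring_1 \<Rightarrow> 'r"
    and smL :: "'k \<Rightarrow> 'l::ab_group_add \<Rightarrow> 'l"
    and br :: "'l \<Rightarrow> 'l \<Rightarrow> 'l"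
    and X :: "nat \<Rightarrow> nat \<Rightarrow> 'r \<Rightarrow> 'l"
    and H :: "'l set"
    and \<psi> :: "'l \<Rightarrow> 'l \<Rightarrow> int \<Rightarrow> 'r"
  assumes modR: "module smR"
    and algR: "\<And>c a b. smR c (a * b) = smR c a * b \<and> smR c (a * b) = a * smR c b"
    and freeR: "\<exists>B. \<not> module.dependent smR B \<and> module.span smR B = UNIV \<and> (1::'r) \<in> B"
    and modL: "module smL"
    and br_add1: "\<And>x x' y. br (x + x') y = br x y + br x' y"
    and br_add2: "\<And>x y y'. br x (y + y') = br x y + br x y'"
    and br_sm1: "\<And>c x y. br (smL c x) y = smL c (br x y)"
    and br_sm2: "\<And>c x y. br x (smL c y) = smL c (br x y)"
    and leibniz: "\<And>x y z. br x (br y z) = br (br x y) z - br (br x z) y"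
    and X_add: "\<And>i j a b. X i j (a + b) = X i j a + X i j b"
    and X_sm: "\<And>i j c a. X i j (smR c a) = smL c (X i j a)"
    and rel1: "\<And>i j k a b. i \<in> {1,2,3} \<Longrightarrow> j \<in> {1,2,3} \<Longrightarrow> k \<in> {1,2,3} \<Longrightarrow>
                 i \<noteq> j \<Longrightarrow> j \<noteq> k \<Longrightarrow> i \<noteq> k \<Longrightarrow> br (X i j a) (X j k b) = X i k (a * b)"
    and rel2: "\<And>i j k a b. i \<in> {1,2,3} \<Longrightarrow> j \<in> {1,2,3} \<Longrightarrow> k \<in> {1,2,3} \<Longrightarrow>
                 i \<noteq> j \<Longrightarrow> j \<noteq> k \<Longrightarrow> i \<noteq> k \<Longrightarrow> br (X i j a) (X k i b) = - X k j (b * a)"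
    and rel3: "\<And>i j k l a b. (i, j) \<in> pairs3 \<Longrightarrow> (k, l) \<in> pairs3 \<Longrightarrow>
                 j \<noteq> k \<Longrightarrow> i \<noteq> l \<Longrightarrow> br (X i j a) (X k l b) = 0"
    and H_def: "H = module.span smL {br (X i j a) (X j i b) | i j a b. (i, j) \<in> pairs3}"
    and decomp: "\<And>x. \<exists>!(h, a). h \<in> H \<and> (\<forall>p. p \<notin> pairs3 \<longrightarrow> a p = 0) \<and>
                   x = h + (\<Sum>(i, j)\<in>pairs3. X i j (a (i, j)))"
    and psi_add1: "\<And>x x' y m. \<psi> (x + x') y m = \<psi> x y m + \<psi> x' y m"
    and psi_add2: "\<And>x y y' m. \<psi> x (y + y') m = \<psi> x y m + \<psi> x y' m"
    and psi_sm1: "\<And>c x y m. \<psi> (smL c x) y m = smR c (\<psi> x y m)"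
    and psi_sm2: "\<And>c x y m. \<psi> x (smL c y) m = smR c (\<psi> x y m)"
    and psi_row: "\<And>i j k a b. i \<in> {1,2,3} \<Longrightarrow> j \<in> {1,2,3} \<Longrightarrow> k \<in> {1,2,3} \<Longrightarrow>
                 i \<noteq> j \<Longrightarrow> j \<noteq> k \<Longrightarrow> i \<noteq> k \<Longrightarrow>
                 \<psi> (X i j a) (X i k b) = single6 (int i) (sgn3 j k * (a * b))"
    and psi_col: "\<And>i j k a b. i \<in> {1,2,3} \<Longrightarrow> j \<in> {1,2,3} \<Longrightarrow> k \<in> {1,2,3} \<Longrightarrow>
                 i \<noteq> j \<Longrightarrow> j \<noteq> k \<Longrightarrow> i \<noteq> k \<Longrightarrow>
                 \<psi> (X i j a) (X k j b) = single6 (- int j) (sgn3 i k * (a * b))"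
    and psi_other: "\<And>i j k l a b. (i, j) \<in> pairs3 \<Longrightarrow> (k, l) \<in> pairs3 \<Longrightarrow>
                 \<not> (i = k \<and> j \<noteq> l) \<Longrightarrow> \<not> (j = l \<and> i \<noteq> k) \<Longrightarrow> \<psi> (X i j a) (X k l b) = (\<lambda>m. 0)"
    and psi_H1: "\<And>h y. h \<in> H \<Longrightarrow> \<psi> h y = (\<lambda>m. 0)"
    and psi_H2: "\<And>x h. h \<in> H \<Longrightarrow> \<psi> x h = (\<lambda>m. 0)"
  shows "\<forall>x y z. \<forall>m \<in> {1, 2, 3, -1, -2, -3}.
           \<psi> x (br y z) m + \<psi> (br x z) y m - \<psi> (br x y) z m \<in> (I3 :: 'r set)"
proof -
  have decomposition: "\<exists>h a. h \<in> H \<and> x = h + (\<Sum>(i, j)\<in>pairs3. X i j (a (i, j)))" for x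
    using ex1_implies_ex[OF decomp[of x]] by auto
  interpret stl3 smR smL br X H \<psi>
    by (rule stl3.intro) (rule assms decomposition; assumption)+
  show ?thesis
    using cocycle_defect_in_I3 unfolding cocycle_defect_def by blast
qed

end
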